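(* Let $f:\mathbb{R}^m\to\mathbb{R}$ be $L$-smooth, and let $\nabla f_\xi(\cdot)$ satisfy $\mathbb{E}_\xi[\nabla f_\xi(x)]=\nabla f(x)$ and $\mathbb{E}_\xi\|\nabla f_\xi(x)-\nabla f(x)\|^2\le\rho^2$ for all $x$. Let $t\ge1$, $x_0\in\mathbb{R}^m$ fixed, and $x_{s+1}=x_s-\gamma\nabla f_{\xi_s}(x_s)$ for $s=0,\dots,t-1$, where each $\xi_s$ is drawn independently of $\xi_0,\dots,\xi_{s-1}$, and $0<\gamma\le\frac{1}{L(t-1)}$ (no restriction when $t=1$). Then $$\mathbb{E}\big[\langle\nabla f_{\xi_0}(x_0)-\nabla f(x_0),\nabla f(x_t)\rangle\big]\le3t\gamma L\rho^2.$$
   Context: $f$ is $L$-smooth means $\nabla f$ is $L$-Lipschitz. *)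

theory Defs
  imports "HOL-Analysis.Analysis" "HOL-Probability.Probability"
begin

fun sgd_iter :: "('b \<Rightarrow> 'a::real_vector \<Rightarrow> 'a) \<Rightarrow> real \<Rightarrow> 'a \<Rightarrow> (nat \<Rightarrow> 'b) \<Rightarrow> nat \<Rightarrow> 'a" where
  "sgd_iter g \<gamma> x0 \<omega> 0 = x0"
| "sgd_iter g \<gamma> x0 \<omega> (Suc s) =
     sgd_iter g \<gamma> x0 \<omega> s - \<gamma> *\<^sub>R g (\<omega> s) (sgd_iter g \<gamma> x0 \<omega> s)"

end

theory Submission
  imports Defs
begin

text \<open>
  Split off the first sample \<xi>: the iterate x_t is SGD run for t - 1 steps, driven by the
  remaining samples, from x_0 - \<gamma> g(\<xi>, x_0). Compare it with the run y_t on the same samples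
  from the deterministic point x_0 - \<gamma> \<nabla>f(x_0). The noise e = g(\<xi>, x_0) - \<nabla>f(x_0) is centred
  and independent of y_t, so its correlation with \<nabla>f(y_t) vanishes, and what remains is at most
  L E[|e| |x_t - y_t|] \<le> L \<rho> (E|x_t - y_t|^2)^(1/2) by Cauchy-Schwarz. One SGD step on common
  samples multiplies the mean-square distance of two runs by at most (1 + \<gamma>L)^2 and adds at
  most 4 \<gamma>^2 \<rho>^2; since (1 + \<gamma>L)^(t-1) \<le> exp 1 \<le> 3 under the step-size condition, this gives
  E|x_t - y_t|^2 \<le> 9 t^2 \<gamma>^2 \<rho>^2.
\<close>

lemma sgd_iter_case_nat:
  "sgd_iter g \<gamma> z (case_nat \<xi> \<omega>) (Suc n) = sgd_iter g \<gamma> (z - \<gamma> *\<^sub>R g \<xi> z) \<omega> n"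
  by (induction n) auto

lemma sgd_iter_cong:
  "(\<And>i. i < n \<Longrightarrow> \<omega> i = \<omega>' i) \<Longrightarrow> sgd_iter g \<gamma> z \<omega> n = sgd_iter g \<gamma> z \<omega>' n"
  by (induction n) auto

lemma (in sequence_space) integral_PiM_finite_eq_S:
  fixes F :: "(nat \<Rightarrow> 'a) \<Rightarrow> 'b::{banach, second_countable_topology}"
  assumes "finite J"
    and F: "F \<in> borel_measurable (\<Pi>\<^sub>M i\<in>J. M)"
    and restrict: "\<And>\<omega>. F (restrict \<omega> J) = F \<omega>"
  shows "(\<integral>\<omega>. F \<omega> \<partial>(\<Pi>\<^sub>M i\<in>J. M)) = (\<integral>\<omega>. F \<omega> \<partial>S)"
proof -
  have "(\<integral>\<omega>. F \<omega> \<partial>(\<Pi>\<^sub>M i\<in>J. M)) = (\<integral>\<omega>. F \<omega> \<partial>distr S (\<Pi>\<^sub>M i\<in>J. M) (\<lambda>\<omega>. restrict \<omega> J))"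
    using distr_PiM_restrict_finite[OF \<open>finite J\<close> subset_UNIV] by simp
  also have "\<dots> = (\<integral>\<omega>. F (restrict \<omega> J) \<partial>S)"
    by (rule integral_distr[OF measurable_restrict_subset[OF subset_UNIV] F])
  finally show ?thesis
    by (simp only: restrict)
qed

lemma (in sequence_space) integral_S_case_nat:
  fixes F :: "(nat \<Rightarrow> 'a) \<Rightarrow> 'b::{banach, second_countable_topology}"
  assumes "F \<in> borel_measurable S"
  shows "(\<integral>\<omega>. F \<omega> \<partial>S) = (\<integral>(\<xi>, \<omega>). F (case_nat \<xi> \<omega>) \<partial>(M \<Otimes>\<^sub>M S))"
  using assms by (subst PiM_iter[symmetric]) (simp add: integral_distr split_beta')

lemma (in sequence_space) nn_integral_S_case_nat:
  assumes "f \<in> borel_measurable S"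
  shows "(\<integral>\<^sup>+\<omega>. f \<omega> \<partial>S) = (\<integral>\<^sup>+\<xi>. \<integral>\<^sup>+\<omega>. f (case_nat \<xi> \<omega>) \<partial>S \<partial>M)"
  using assms by (subst PiM_iter[symmetric]) (simp add: nn_integral_distr nn_integral_fst[symmetric])

lemma (in pair_sigma_finite) integral_centered_inner_le:
  fixes e :: "'a \<Rightarrow> 'c::euclidean_space" and v :: "'a \<Rightarrow> 'b \<Rightarrow> 'c" and c :: "'b \<Rightarrow> 'c"
  assumes e: "integrable M1 e" "(\<integral>x. e x \<partial>M1) = 0"
    and meas: "(\<lambda>(x, y). norm (e x) * norm (v x y - c y)) \<in> borel_measurable (M1 \<Otimes>\<^sub>M M2)"
    and bound: "(\<integral>\<^sup>+(x, y). ennreal (norm (e x) * norm (v x y - c y)) \<partial>(M1 \<Otimes>\<^sub>M M2)) \<le> ennreal r"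
    and "0 \<le> r"
  shows "(\<integral>(x, y). e x \<bullet> v x y \<partial>(M1 \<Otimes>\<^sub>M M2)) \<le> r"
proof (cases "integrable (M1 \<Otimes>\<^sub>M M2) (\<lambda>(x, y). e x \<bullet> v x y)")
  case False
  then show ?thesis
    using \<open>0 \<le> r\<close> by (simp add: not_integrable_integral_eq)
next
  case True
  have inner_le: "ennreal (\<integral>x. e x \<bullet> v x y \<partial>M1) \<le> (\<integral>\<^sup>+x. ennreal (norm (e x) * norm (v x y - c y)) \<partial>M1)"
    if int: "integrable M1 (\<lambda>x. e x \<bullet> v x y)" for y
  proof -
    have "(\<integral>x. e x \<bullet> v x y \<partial>M1) = (\<integral>x. e x \<bullet> (v x y - c y) \<partial>M1)"
      using int e by (simp add: inner_diff_right Bochner_Integration.integral_diff)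
    also have "\<dots> \<le> norm (\<integral>x. e x \<bullet> (v x y - c y) \<partial>M1)"
      by simp
    finally have "ennreal (\<integral>x. e x \<bullet> v x y \<partial>M1) \<le> (\<integral>\<^sup>+x. norm (e x \<bullet> (v x y - c y)) \<partial>M1)"
      using integral_norm_bound_ennreal[of M1 "\<lambda>x. e x \<bullet> (v x y - c y)"] int e(1)
      by (simp add: inner_diff_right) (meson ennreal_leI order_trans)
    also have "\<dots> \<le> (\<integral>\<^sup>+x. ennreal (norm (e x) * norm (v x y - c y)) \<partial>M1)"
      by (intro nn_integral_mono ennreal_leI) (simp add: Cauchy_Schwarz_ineq2)
    finally show ?thesis .
  qed
  have "(\<integral>\<^sup>+y. ennreal (\<integral>x. e x \<bullet> v x y \<partial>M1) \<partial>M2)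
      \<le> (\<integral>\<^sup>+y. \<integral>\<^sup>+x. ennreal (norm (e x) * norm (v x y - c y)) \<partial>M1 \<partial>M2)"
    using AE_integrable_snd[OF True] by (intro nn_integral_mono_AE) (auto elim!: AE_mp intro: inner_le)
  also have "\<dots> \<le> ennreal r"
    using nn_integral_snd[of "\<lambda>(x, y). ennreal (norm (e x) * norm (v x y - c y))"] meas bound
    by (simp add: split_beta')
  finally have "(\<integral>y. (\<integral>x. e x \<bullet> v x y \<partial>M1) \<partial>M2) \<le> r"
    by (rule integral_real_bounded[OF \<open>0 \<le> r\<close>])
  then show ?thesis
    by (simp only: integral_snd[OF True])
qed

lemma (in prob_space) nn_integral_norm_sq_add_centered:
  fixes W :: "'a \<Rightarrow> 'b::euclidean_space"
  assumes W: "integrable M W" "expectation W = 0"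
    and W_sq: "integrable M (\<lambda>x. (norm (W x))\<^sup>2)"
  shows "(\<integral>\<^sup>+x. ennreal ((norm (u + W x))\<^sup>2) \<partial>M) = ennreal ((norm u)\<^sup>2 + expectation (\<lambda>x. (norm (W x))\<^sup>2))"
proof -
  have expand: "(norm (u + W x))\<^sup>2 = (norm u)\<^sup>2 + 2 * (u \<bullet> W x) + (norm (W x))\<^sup>2" for x
    by (simp add: power2_norm_eq_inner inner_add_left inner_add_right inner_commute)
  have "(\<integral>\<^sup>+x. ennreal ((norm (u + W x))\<^sup>2) \<partial>M) = ennreal (expectation (\<lambda>x. (norm (u + W x))\<^sup>2))"
  proof (rule nn_integral_eq_integral)
    show "integrable M (\<lambda>x. (norm (u + W x))\<^sup>2)"
      using W W_sq by (simp add: expand)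
  qed simp
  also have "expectation (\<lambda>x. (norm (u + W x))\<^sup>2) = (norm u)\<^sup>2 + expectation (\<lambda>x. (norm (W x))\<^sup>2)"
    using W W_sq by (simp add: expand prob_space)
  finally show ?thesis .
qed

lemma growth_sum_le:
  fixes c :: real
  assumes c: "0 \<le> c" "c * real n \<le> 1"
  shows "(1 + c) ^ (2 * n) + 4 * (\<Sum>k<n. (1 + c) ^ (2 * k)) \<le> 9 * (real n + 1)\<^sup>2"
proof -
  have "(1 + c) ^ n \<le> exp c ^ n"
    using c by (intro power_mono) (auto simp: add.commute exp_ge_add_one_self)
  also have "\<dots> \<le> exp 1"
    using c by (simp add: exp_of_nat_mult[symmetric] mult.commute)
  also have "\<dots> \<le> 3"
    by (rule exp_le)
  finally have "((1 + c) ^ n)\<^sup>2 \<le> 3\<^sup>2"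
    using c by (intro power_mono) auto
  then have top: "(1 + c) ^ (2 * n) \<le> 9"
    by (simp add: power_mult mult.commute)
  have "(\<Sum>k<n. (1 + c) ^ (2 * k)) \<le> real n * (1 + c) ^ (2 * n)"
    using sum_bounded_above[of "{..<n}" "\<lambda>k. (1 + c) ^ (2 * k)" "(1 + c) ^ (2 * n)"] c
    by (simp add: power_increasing)
  then have sum: "(1 + c) ^ (2 * n) + 4 * (\<Sum>k<n. (1 + c) ^ (2 * k)) \<le> (1 + 4 * real n) * (1 + c) ^ (2 * n)"
    by (simp add: algebra_simps)
  consider "n = 1" | "n \<noteq> 1"
    by blast
  then show ?thesis
  proof cases
    case 1
    with c have "(1 + c)\<^sup>2 \<le> 2\<^sup>2"
      by (intro power_mono) auto
    with 1 show ?thesis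
      by simp
  next
    case 2
    then have "n = 0 \<or> 2 \<le> real n"
      by linarith
    then have "2 * real n \<le> real n * real n"
      by (auto intro: mult_right_mono)
    then have "1 + 4 * real n \<le> (real n + 1)\<^sup>2"
      by (simp add: power2_eq_square algebra_simps)
    then have "(1 + 4 * real n) * (1 + c) ^ (2 * n) \<le> (real n + 1)\<^sup>2 * 9"
      using top c by (intro mult_mono) auto
    with sum show ?thesis
      by simp
  qed
qed

lemma norm_diff_sq_le:
  fixes a b :: "'a::real_normed_vector"
  shows "(norm (a - b))\<^sup>2 \<le> 2 * (norm a)\<^sup>2 + 2 * (norm b)\<^sup>2"
proof -
  have "(norm (a - b))\<^sup>2 \<le> (norm a + norm b)\<^sup>2"
    by (simp add: norm_triangle_ineq4 power_mono)
  also have "\<dots> \<le> 2 * (norm a)\<^sup>2 + 2 * (norm b)\<^sup>2"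
    using zero_le_power2[of "norm a - norm b"] by (simp add: power2_diff power2_sum)
  finally show ?thesis .
qed

lemma ennreal_le_of_power2_le:
  assumes "x\<^sup>2 \<le> (ennreal r)\<^sup>2" "0 \<le> r"
  shows "x \<le> ennreal r"
proof (cases x rule: ennreal_cases)
  case (real a)
  with assms have "a\<^sup>2 \<le> r\<^sup>2"
    by (simp add: ennreal_power)
  with real \<open>0 \<le> r\<close> show ?thesis
    by (auto intro: ennreal_leI power2_le_imp_le)
next
  case top
  with assms show ?thesis
    by (simp add: ennreal_power top_unique)
qed

lemma nn_integral_mult_le_of_sq_le:
  fixes f h :: "'a \<Rightarrow> real"
  assumes [measurable]: "f \<in> borel_measurable M" "h \<in> borel_measurable M"
    and nonneg: "\<And>x. 0 \<le> f x" "\<And>x. 0 \<le> h x"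
    and f_sq: "(\<integral>\<^sup>+x. ennreal ((f x)\<^sup>2) \<partial>M) \<le> ennreal (A\<^sup>2)"
    and h_sq: "(\<integral>\<^sup>+x. ennreal ((h x)\<^sup>2) \<partial>M) \<le> ennreal (B\<^sup>2)"
    and "0 \<le> A" "0 \<le> B"
  shows "(\<integral>\<^sup>+x. ennreal (f x * h x) \<partial>M) \<le> ennreal (A * B)"
proof (rule ennreal_le_of_power2_le)
  have "(\<integral>\<^sup>+x. ennreal (f x * h x) \<partial>M)\<^sup>2 \<le> (\<integral>\<^sup>+x. ennreal ((f x)\<^sup>2) \<partial>M) * (\<integral>\<^sup>+x. ennreal ((h x)\<^sup>2) \<partial>M)"
    using Cauchy_Schwarz_nn_integral[of "\<lambda>x. ennreal (f x)" M "\<lambda>x. ennreal (h x)"] nonneg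
    by (simp add: ennreal_mult ennreal_power)
  also have "\<dots> \<le> ennreal (A\<^sup>2) * ennreal (B\<^sup>2)"
    by (intro mult_mono f_sq h_sq) simp_all
  also have "\<dots> = (ennreal (A * B))\<^sup>2"
    using \<open>0 \<le> A\<close> \<open>0 \<le> B\<close> by (simp add: ennreal_mult[symmetric] ennreal_power power_mult_distrib)
  finally show "(\<integral>\<^sup>+x. ennreal (f x * h x) \<partial>M)\<^sup>2 \<le> (ennreal (A * B))\<^sup>2" .
  show "0 \<le> A * B"
    using \<open>0 \<le> A\<close> \<open>0 \<le> B\<close> by simp
qed

locale sgd_model = prob_space D
  for D :: "'b measure" +
  fixes grad :: "'a::euclidean_space \<Rightarrow> 'a" and g :: "'b \<Rightarrow> 'a \<Rightarrow> 'a" and L \<rho> \<gamma> :: real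
  assumes grad_lipschitz: "L-lipschitz_on UNIV grad"
    and g_measurable: "(\<lambda>(\<xi>, x). g \<xi> x) \<in> borel_measurable (D \<Otimes>\<^sub>M borel)"
    and unbiased: "\<And>x. has_bochner_integral D (\<lambda>\<xi>. g \<xi> x) (grad x)"
    and variance: "\<And>x. (\<integral>\<^sup>+\<xi>. ennreal ((norm (g \<xi> x - grad x))\<^sup>2) \<partial>D) \<le> ennreal (\<rho>\<^sup>2)"
    and step_pos: "0 < \<gamma>"

sublocale sgd_model \<subseteq> Seq: sequence_space D
  by unfold_locales

context sgd_model
begin

interpretation DS: pair_prob_space D Seq.S
  by unfold_locales

lemma L_nonneg: "0 \<le> L"
  using grad_lipschitz lipschitz_on_nonneg by blast

lemma grad_dist_le: "norm (grad x - grad y) \<le> L * norm (x - y)"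
  using grad_lipschitz lipschitz_on_normD by blast

lemma grad_measurable[measurable]: "grad \<in> borel_measurable borel"
  using grad_lipschitz by (intro borel_measurable_continuous_onI lipschitz_on_continuous_on)

lemma measurable_g:
  assumes "\<xi> \<in> measurable N D" "x \<in> borel_measurable N"
  shows "(\<lambda>y. g (\<xi> y) (x y)) \<in> borel_measurable N"
  using measurable_compose[OF measurable_Pair[OF assms] g_measurable] by simp

lemma g_borel_measurable[measurable]: "(\<lambda>\<xi>. g \<xi> x) \<in> borel_measurable D"
  by (rule measurable_g) simp_all

lemma measurable_sgd_iter:
  assumes "{..<n} \<subseteq> I" "z \<in> borel_measurable N" "\<omega> \<in> measurable N (\<Pi>\<^sub>M i\<in>I. D)"
  shows "(\<lambda>y. sgd_iter g \<gamma> (z y) (\<omega> y) n) \<in> borel_measurable N"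
  using assms(1)
proof (induction n)
  case (Suc n)
  then have "(\<lambda>y. sgd_iter g \<gamma> (z y) (\<omega> y) n) \<in> borel_measurable N"
    using lessThan_subset_iff[of n "Suc n"] by (meson le_SucI order.refl order.trans)
  moreover have "(\<lambda>y. \<omega> y n) \<in> measurable N D"
    using Suc.prems measurable_compose[OF assms(3) measurable_component_singleton] by auto
  ultimately have "(\<lambda>y. g (\<omega> y n) (sgd_iter g \<gamma> (z y) (\<omega> y) n)) \<in> borel_measurable N"
    by (rule measurable_g[rotated])
  with \<open>(\<lambda>y. sgd_iter g \<gamma> (z y) (\<omega> y) n) \<in> borel_measurable N\<close> show ?case
    by simp
qed (simp add: assms(2))

lemma noise_integrable: "integrable D (\<lambda>\<xi>. g \<xi> x - grad x)"
  using integrable.intros[OF unbiased[of x]] by simp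

lemma noise_expectation: "expectation (\<lambda>\<xi>. g \<xi> x - grad x) = 0"
  using integrable.intros[OF unbiased[of x]] has_bochner_integral_integral_eq[OF unbiased[of x]]
  by (simp add: prob_space)

lemma noise_sq_integrable: "integrable D (\<lambda>\<xi>. (norm (g \<xi> x - grad x))\<^sup>2)"
proof (rule integrableI_bounded)
  show "(\<integral>\<^sup>+\<xi>. ennreal (norm ((norm (g \<xi> x - grad x))\<^sup>2)) \<partial>D) < \<infinity>"
    using variance[of x] by (simp add: le_less_trans)
qed simp

lemma noise_sq_expectation_le: "expectation (\<lambda>\<xi>. (norm (g \<xi> x - grad x))\<^sup>2) \<le> \<rho>\<^sup>2"
  using variance[of x] noise_sq_integrable[of x]
  by (simp add: nn_integral_eq_integral ennreal_le_iff[symmetric] del: ennreal_le_iff)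

lemma sgd_iter_measurable_S[measurable]: "(\<lambda>\<omega>. sgd_iter g \<gamma> x \<omega> n) \<in> borel_measurable Seq.S"
  by (rule measurable_sgd_iter[of n UNIV]) simp_all

lemma noise_diff_sq:
  fixes x y :: 'a
  defines "w \<equiv> \<lambda>\<xi>. (g \<xi> x - grad x) - (g \<xi> y - grad y)"
  shows noise_diff_sq_integrable: "integrable D (\<lambda>\<xi>. (norm (w \<xi>))\<^sup>2)"
    and noise_diff_sq_expectation_le: "expectation (\<lambda>\<xi>. (norm (w \<xi>))\<^sup>2) \<le> 4 * \<rho>\<^sup>2"
proof -
  define h where "h = (\<lambda>\<xi>. 2 * (norm (g \<xi> x - grad x))\<^sup>2 + 2 * (norm (g \<xi> y - grad y))\<^sup>2)"
  have h: "integrable D h"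
    unfolding h_def using noise_sq_integrable by simp
  have le_h: "(norm (w \<xi>))\<^sup>2 \<le> h \<xi>" for \<xi>
    unfolding w_def h_def by (simp add: norm_diff_sq_le)
  show w: "integrable D (\<lambda>\<xi>. (norm (w \<xi>))\<^sup>2)"
  proof (rule Bochner_Integration.integrable_bound[OF h])
    show "AE \<xi> in D. norm ((norm (w \<xi>))\<^sup>2) \<le> norm (h \<xi>)"
      using le_h by (intro AE_I2) (simp add: order_trans[OF _ abs_ge_self])
  qed (simp add: w_def)
  have "expectation (\<lambda>\<xi>. (norm (w \<xi>))\<^sup>2) \<le> expectation h"
    by (rule integral_mono[OF w h le_h])
  also have "\<dots> \<le> 4 * \<rho>\<^sup>2"
    using noise_sq_expectation_le[of x] noise_sq_expectation_le[of y] noise_sq_integrable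
    by (simp add: h_def)
  finally show "expectation (\<lambda>\<xi>. (norm (w \<xi>))\<^sup>2) \<le> 4 * \<rho>\<^sup>2" .
qed

lemma coupled_step_sq_dist:
  "(\<integral>\<^sup>+\<xi>. ennreal ((norm ((x - \<gamma> *\<^sub>R g \<xi> x) - (y - \<gamma> *\<^sub>R g \<xi> y)))\<^sup>2) \<partial>D)
     \<le> ennreal ((1 + \<gamma> * L)\<^sup>2 * (norm (x - y))\<^sup>2 + 4 * \<gamma>\<^sup>2 * \<rho>\<^sup>2)"
proof -
  define u where "u = x - y - \<gamma> *\<^sub>R (grad x - grad y)"
  define w where "w \<xi> = (g \<xi> x - grad x) - (g \<xi> y - grad y)" for \<xi>
  have split: "(x - \<gamma> *\<^sub>R g \<xi> x) - (y - \<gamma> *\<^sub>R g \<xi> y) = u + (- \<gamma>) *\<^sub>R w \<xi>" for \<xi>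
    by (simp add: u_def w_def algebra_simps)
  have "norm u \<le> norm (x - y) + \<gamma> * norm (grad x - grad y)"
    unfolding u_def using step_pos norm_triangle_ineq4[of "x - y" "\<gamma> *\<^sub>R (grad x - grad y)"] by simp
  also have "\<dots> \<le> (1 + \<gamma> * L) * norm (x - y)"
    using grad_dist_le[of x y] step_pos by (simp add: algebra_simps mult_left_mono)
  finally have u: "(norm u)\<^sup>2 \<le> (1 + \<gamma> * L)\<^sup>2 * (norm (x - y))\<^sup>2"
    by (simp add: power_mult_distrib[symmetric] power_mono)
  have w: "integrable D w" "expectation w = 0"
    unfolding w_def using noise_integrable noise_expectation by simp_all
  have w_sq: "integrable D (\<lambda>\<xi>. (norm (w \<xi>))\<^sup>2)" "expectation (\<lambda>\<xi>. (norm (w \<xi>))\<^sup>2) \<le> 4 * \<rho>\<^sup>2"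
    unfolding w_def by (rule noise_diff_sq_integrable, rule noise_diff_sq_expectation_le)
  have "(\<integral>\<^sup>+\<xi>. ennreal ((norm ((x - \<gamma> *\<^sub>R g \<xi> x) - (y - \<gamma> *\<^sub>R g \<xi> y)))\<^sup>2) \<partial>D)
      = ennreal ((norm u)\<^sup>2 + expectation (\<lambda>\<xi>. (norm ((- \<gamma>) *\<^sub>R w \<xi>))\<^sup>2))"
    unfolding split using w w_sq by (intro nn_integral_norm_sq_add_centered) (simp_all add: power_mult_distrib)
  also have "\<dots> \<le> ennreal ((1 + \<gamma> * L)\<^sup>2 * (norm (x - y))\<^sup>2 + 4 * \<gamma>\<^sup>2 * \<rho>\<^sup>2)"
    using u w_sq mult_left_mono[OF w_sq(2), of "\<gamma>\<^sup>2"] by (intro ennreal_leI) (simp add: power_mult_distrib)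
  finally show ?thesis .
qed

lemma coupled_iter_sq_dist:
  "(\<integral>\<^sup>+\<omega>. ennreal ((norm (sgd_iter g \<gamma> x \<omega> n - sgd_iter g \<gamma> y \<omega> n))\<^sup>2) \<partial>Seq.S)
     \<le> ennreal ((1 + \<gamma> * L) ^ (2 * n) * (norm (x - y))\<^sup>2
                + 4 * \<gamma>\<^sup>2 * \<rho>\<^sup>2 * (\<Sum>k<n. (1 + \<gamma> * L) ^ (2 * k)))"
proof (induction n arbitrary: x y)
  case 0
  then show ?case
    by (simp add: Seq.P.emeasure_space_1)
next
  case (Suc n)
  define a where "a = (1 + \<gamma> * L) ^ (2 * n)"
  define b where "b = 4 * \<gamma>\<^sup>2 * \<rho>\<^sup>2 * (\<Sum>k<n. (1 + \<gamma> * L) ^ (2 * k))"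
  have "0 \<le> \<gamma> * L"
    using step_pos L_nonneg by simp
  then have ab: "0 \<le> a" "0 \<le> b"
    unfolding a_def b_def by (auto intro!: sum_nonneg mult_nonneg_nonneg)
  let ?step = "\<lambda>\<xi> x. x - \<gamma> *\<^sub>R g \<xi> x"
  have "(\<integral>\<^sup>+\<omega>. ennreal ((norm (sgd_iter g \<gamma> x \<omega> (Suc n) - sgd_iter g \<gamma> y \<omega> (Suc n)))\<^sup>2) \<partial>Seq.S)
      = (\<integral>\<^sup>+\<xi>. \<integral>\<^sup>+\<omega>. ennreal ((norm (sgd_iter g \<gamma> (?step \<xi> x) \<omega> n - sgd_iter g \<gamma> (?step \<xi> y) \<omega> n))\<^sup>2) \<partial>Seq.S \<partial>D)"
    by (subst Seq.nn_integral_S_case_nat) (simp_all add: sgd_iter_case_nat del: sgd_iter.simps)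
  also have "\<dots> \<le> (\<integral>\<^sup>+\<xi>. ennreal a * ennreal ((norm (?step \<xi> x - ?step \<xi> y))\<^sup>2) + ennreal b \<partial>D)"
    using Suc.IH ab by (intro nn_integral_mono) (simp add: a_def b_def ennreal_plus ennreal_mult)
  also have "\<dots> = ennreal a * (\<integral>\<^sup>+\<xi>. ennreal ((norm (?step \<xi> x - ?step \<xi> y))\<^sup>2) \<partial>D) + ennreal b"
    by (simp add: nn_integral_add nn_integral_cmult emeasure_space_1)
  also have "\<dots> \<le> ennreal a * ennreal ((1 + \<gamma> * L)\<^sup>2 * (norm (x - y))\<^sup>2 + 4 * \<gamma>\<^sup>2 * \<rho>\<^sup>2) + ennreal b"
    by (intro add_right_mono mult_left_mono coupled_step_sq_dist) simp
  also have "\<dots> = ennreal (a * ((1 + \<gamma> * L)\<^sup>2 * (norm (x - y))\<^sup>2 + 4 * \<gamma>\<^sup>2 * \<rho>\<^sup>2) + b)"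
    using ab by (simp add: ennreal_plus ennreal_mult)
  also have "a * ((1 + \<gamma> * L)\<^sup>2 * (norm (x - y))\<^sup>2 + 4 * \<gamma>\<^sup>2 * \<rho>\<^sup>2) + b
      = (1 + \<gamma> * L) ^ (2 * Suc n) * (norm (x - y))\<^sup>2 + 4 * \<gamma>\<^sup>2 * \<rho>\<^sup>2 * (\<Sum>k<Suc n. (1 + \<gamma> * L) ^ (2 * k))"
    unfolding a_def b_def by (simp add: power_add power2_eq_square algebra_simps)
  finally show ?case .
qed

lemma first_step_sgd_iter_measurable[measurable]:
  "(\<lambda>p. sgd_iter g \<gamma> (x - \<gamma> *\<^sub>R g (fst p) x) (snd p) n) \<in> borel_measurable (D \<Otimes>\<^sub>M Seq.S)"
  by (rule measurable_sgd_iter[OF subset_UNIV _ measurable_snd]) measurable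

lemma nn_integral_noise_sq_pair_le:
  "(\<integral>\<^sup>+p. ennreal ((norm (g (fst p) x - grad x))\<^sup>2) \<partial>(D \<Otimes>\<^sub>M Seq.S)) \<le> ennreal (\<bar>\<rho>\<bar>\<^sup>2)"
  using variance[of x]
  by (subst Seq.nn_integral_fst[symmetric]) (simp_all add: Seq.P.emeasure_space_1)

lemma nn_integral_first_step_coupling_le:
  assumes "\<gamma> * L * real n \<le> 1"
  shows "(\<integral>\<^sup>+p. ennreal ((norm (sgd_iter g \<gamma> (x - \<gamma> *\<^sub>R g (fst p) x) (snd p) n
                                   - sgd_iter g \<gamma> (x - \<gamma> *\<^sub>R grad x) (snd p) n))\<^sup>2) \<partial>(D \<Otimes>\<^sub>M Seq.S))
         \<le> ennreal ((3 * (real n + 1) * \<gamma> * \<bar>\<rho>\<bar>)\<^sup>2)"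
proof -
  define a where "a = (1 + \<gamma> * L) ^ (2 * n)"
  define b where "b = 4 * \<gamma>\<^sup>2 * \<rho>\<^sup>2 * (\<Sum>k<n. (1 + \<gamma> * L) ^ (2 * k))"
  have ab: "0 \<le> a" "0 \<le> b"
    using step_pos L_nonneg unfolding a_def b_def by (auto intro!: sum_nonneg mult_nonneg_nonneg)
  have start_dist: "norm ((x - \<gamma> *\<^sub>R g \<xi> x) - (x - \<gamma> *\<^sub>R grad x)) = \<gamma> * norm (g \<xi> x - grad x)" for \<xi>
    using step_pos by (simp add: scaleR_diff_right[symmetric] norm_minus_commute)
  have "(\<integral>\<^sup>+p. ennreal ((norm (sgd_iter g \<gamma> (x - \<gamma> *\<^sub>R g (fst p) x) (snd p) n
                                - sgd_iter g \<gamma> (x - \<gamma> *\<^sub>R grad x) (snd p) n))\<^sup>2) \<partial>(D \<Otimes>\<^sub>M Seq.S))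
      = (\<integral>\<^sup>+\<xi>. \<integral>\<^sup>+\<omega>. ennreal ((norm (sgd_iter g \<gamma> (x - \<gamma> *\<^sub>R g \<xi> x) \<omega> n
                                    - sgd_iter g \<gamma> (x - \<gamma> *\<^sub>R grad x) \<omega> n))\<^sup>2) \<partial>Seq.S \<partial>D)"
    by (subst Seq.nn_integral_fst[symmetric]) simp_all
  also have "\<dots> \<le> (\<integral>\<^sup>+\<xi>. ennreal (a * \<gamma>\<^sup>2) * ennreal ((norm (g \<xi> x - grad x))\<^sup>2) + ennreal b \<partial>D)"
  proof (intro nn_integral_mono)
    fix \<xi>
    show "(\<integral>\<^sup>+\<omega>. ennreal ((norm (sgd_iter g \<gamma> (x - \<gamma> *\<^sub>R g \<xi> x) \<omega> n
                                    - sgd_iter g \<gamma> (x - \<gamma> *\<^sub>R grad x) \<omega> n))\<^sup>2) \<partial>Seq.S)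
        \<le> ennreal (a * \<gamma>\<^sup>2) * ennreal ((norm (g \<xi> x - grad x))\<^sup>2) + ennreal b"
      using coupled_iter_sq_dist[of "x - \<gamma> *\<^sub>R g \<xi> x" n "x - \<gamma> *\<^sub>R grad x"] ab
      unfolding start_dist by (simp add: a_def b_def power_mult_distrib ennreal_plus ennreal_mult mult_ac)
  qed
  also have "\<dots> = ennreal (a * \<gamma>\<^sup>2) * (\<integral>\<^sup>+\<xi>. ennreal ((norm (g \<xi> x - grad x))\<^sup>2) \<partial>D) + ennreal b"
    by (simp add: nn_integral_add nn_integral_cmult emeasure_space_1)
  also have "\<dots> \<le> ennreal (a * \<gamma>\<^sup>2) * ennreal (\<rho>\<^sup>2) + ennreal b"
    by (intro add_right_mono mult_left_mono variance) simp
  also have "\<dots> = ennreal (a * \<gamma>\<^sup>2 * \<rho>\<^sup>2 + b)"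
    using ab by (simp add: ennreal_plus ennreal_mult)
  also have "a * \<gamma>\<^sup>2 * \<rho>\<^sup>2 + b = \<gamma>\<^sup>2 * \<rho>\<^sup>2 * (a + 4 * (\<Sum>k<n. (1 + \<gamma> * L) ^ (2 * k)))"
    by (simp add: b_def algebra_simps)
  also have "\<dots> \<le> \<gamma>\<^sup>2 * \<rho>\<^sup>2 * (9 * (real n + 1)\<^sup>2)"
    using growth_sum_le[of "\<gamma> * L" n] step_pos L_nonneg assms
    by (intro mult_left_mono) (simp_all add: a_def)
  also have "\<dots> = (3 * (real n + 1) * \<gamma> * \<bar>\<rho>\<bar>)\<^sup>2"
    by (simp add: power2_eq_square algebra_simps)
  finally show ?thesis
    by (simp add: ennreal_leI)
qed

lemma nn_integral_first_step_grad_coupling_le: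
  assumes "\<gamma> * L * real n \<le> 1"
  shows "(\<integral>\<^sup>+p. ennreal ((norm (grad (sgd_iter g \<gamma> (x - \<gamma> *\<^sub>R g (fst p) x) (snd p) n)
                                   - grad (sgd_iter g \<gamma> (x - \<gamma> *\<^sub>R grad x) (snd p) n)))\<^sup>2) \<partial>(D \<Otimes>\<^sub>M Seq.S))
         \<le> ennreal ((3 * (real n + 1) * \<gamma> * L * \<bar>\<rho>\<bar>)\<^sup>2)"
proof -
  let ?x = "\<lambda>p. sgd_iter g \<gamma> (x - \<gamma> *\<^sub>R g (fst p) x) (snd p) n"
  let ?y = "\<lambda>p. sgd_iter g \<gamma> (x - \<gamma> *\<^sub>R grad x) (snd p) n"
  have "(\<integral>\<^sup>+p. ennreal ((norm (grad (?x p) - grad (?y p)))\<^sup>2) \<partial>(D \<Otimes>\<^sub>M Seq.S))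
      \<le> (\<integral>\<^sup>+p. ennreal (L\<^sup>2) * ennreal ((norm (?x p - ?y p))\<^sup>2) \<partial>(D \<Otimes>\<^sub>M Seq.S))"
    using grad_dist_le L_nonneg
    by (intro nn_integral_mono) (simp add: ennreal_mult[symmetric] power_mult_distrib[symmetric] power_mono)
  also have "\<dots> = ennreal (L\<^sup>2) * (\<integral>\<^sup>+p. ennreal ((norm (?x p - ?y p))\<^sup>2) \<partial>(D \<Otimes>\<^sub>M Seq.S))"
    by (rule nn_integral_cmult) measurable
  also have "\<dots> \<le> ennreal (L\<^sup>2) * ennreal ((3 * (real n + 1) * \<gamma> * \<bar>\<rho>\<bar>)\<^sup>2)"
    by (intro mult_left_mono nn_integral_first_step_coupling_le assms) simp
  also have "\<dots> = ennreal ((3 * (real n + 1) * \<gamma> * L * \<bar>\<rho>\<bar>)\<^sup>2)"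
    by (simp add: ennreal_mult[symmetric] power_mult_distrib mult_ac)
  finally show ?thesis .
qed

lemma noise_correlation_le:
  assumes "\<gamma> * L * real n \<le> 1"
  shows "(\<integral>(\<xi>, \<omega>). (g \<xi> x - grad x) \<bullet> grad (sgd_iter g \<gamma> (x - \<gamma> *\<^sub>R g \<xi> x) \<omega> n) \<partial>(D \<Otimes>\<^sub>M Seq.S))
         \<le> 3 * (real n + 1) * \<gamma> * L * \<rho>\<^sup>2"
proof (rule DS.integral_centered_inner_le)
  let ?c = "\<lambda>\<omega>. grad (sgd_iter g \<gamma> (x - \<gamma> *\<^sub>R grad x) \<omega> n)"
  let ?v = "\<lambda>\<xi> \<omega>. grad (sgd_iter g \<gamma> (x - \<gamma> *\<^sub>R g \<xi> x) \<omega> n)"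
  show "integrable D (\<lambda>\<xi>. g \<xi> x - grad x)" "expectation (\<lambda>\<xi>. g \<xi> x - grad x) = 0"
    by (rule noise_integrable, rule noise_expectation)
  show "(\<lambda>(\<xi>, \<omega>). norm (g \<xi> x - grad x) * norm (?v \<xi> \<omega> - ?c \<omega>)) \<in> borel_measurable (D \<Otimes>\<^sub>M Seq.S)"
    unfolding split_beta' by measurable
  have "(\<integral>\<^sup>+p. ennreal (norm (g (fst p) x - grad x) * norm (?v (fst p) (snd p) - ?c (snd p))) \<partial>(D \<Otimes>\<^sub>M Seq.S))
      \<le> ennreal (\<bar>\<rho>\<bar> * (3 * (real n + 1) * \<gamma> * L * \<bar>\<rho>\<bar>))"
    by (rule nn_integral_mult_le_of_sq_le[OF _ _ _ _ nn_integral_noise_sq_pair_le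
          nn_integral_first_step_grad_coupling_le[OF assms]]) (use step_pos L_nonneg in auto)
  also have "\<bar>\<rho>\<bar> * (3 * (real n + 1) * \<gamma> * L * \<bar>\<rho>\<bar>) = 3 * (real n + 1) * \<gamma> * L * \<rho>\<^sup>2"
    by (simp add: power2_eq_square abs_mult_self_eq flip: abs_mult)
  finally show "(\<integral>\<^sup>+(\<xi>, \<omega>). ennreal (norm (g \<xi> x - grad x) * norm (?v \<xi> \<omega> - ?c \<omega>)) \<partial>(D \<Otimes>\<^sub>M Seq.S))
      \<le> ennreal (3 * (real n + 1) * \<gamma> * L * \<rho>\<^sup>2)"
    by (simp add: split_beta')
  show "0 \<le> 3 * (real n + 1) * \<gamma> * L * \<rho>\<^sup>2"
    using L_nonneg step_pos by simp
qed

lemma integral_PiM_first_sample: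
  "(\<integral>\<omega>. (g (\<omega> 0) x - grad x) \<bullet> grad (sgd_iter g \<gamma> x \<omega> (Suc n)) \<partial>(\<Pi>\<^sub>M i\<in>{..<Suc n}. D))
     = (\<integral>(\<xi>, \<omega>). (g \<xi> x - grad x) \<bullet> grad (sgd_iter g \<gamma> (x - \<gamma> *\<^sub>R g \<xi> x) \<omega> n) \<partial>(D \<Otimes>\<^sub>M Seq.S))"
proof -
  let ?F = "\<lambda>\<omega>. (g (\<omega> 0) x - grad x) \<bullet> grad (sgd_iter g \<gamma> x \<omega> (Suc n))"
  have "?F \<in> borel_measurable (\<Pi>\<^sub>M i\<in>I. D)" if "{..<Suc n} \<subseteq> I" for I
  proof -
    have "(\<lambda>\<omega>. \<omega> 0) \<in> measurable (\<Pi>\<^sub>M i\<in>I. D) D"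
      using that by (intro measurable_component_singleton) auto
    with measurable_sgd_iter[OF that borel_measurable_const measurable_ident_sets[OF refl]]
    show ?thesis
      by measurable
  qed
  moreover have "?F (restrict \<omega> {..<Suc n}) = ?F \<omega>" for \<omega>
  proof -
    have "sgd_iter g \<gamma> x (restrict \<omega> {..<Suc n}) (Suc n) = sgd_iter g \<gamma> x \<omega> (Suc n)"
      by (rule sgd_iter_cong) simp
    then show ?thesis
      by (simp del: sgd_iter.simps)
  qed
  ultimately show ?thesis
    by (simp add: Seq.integral_PiM_finite_eq_S Seq.integral_S_case_nat sgd_iter_case_nat del: sgd_iter.simps)
qed

end

theorem lemma7:
  fixes f :: "'a::euclidean_space \<Rightarrow> real"
    and grad :: "'a \<Rightarrow> 'a"
    and D :: "'b measure"
    and g :: "'b \<Rightarrow> 'a \<Rightarrow> 'a"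
    and L \<rho> \<gamma> :: real and t :: nat and x0 :: 'a
  assumes grad: "\<And>x. (f has_derivative (\<lambda>h. grad x \<bullet> h)) (at x)"
    and smooth: "L-lipschitz_on UNIV grad"
    and D: "prob_space D"
    and g_meas: "(\<lambda>(\<xi>, x). g \<xi> x) \<in> borel_measurable (D \<Otimes>\<^sub>M borel)"
    and unbiased: "\<And>x. has_bochner_integral D (\<lambda>\<xi>. g \<xi> x) (grad x)"
    and variance: "\<And>x. (\<integral>\<^sup>+ \<xi>. ennreal ((norm (g \<xi> x - grad x))\<^sup>2) \<partial>D) \<le> ennreal (\<rho>\<^sup>2)"
    and t: "t \<ge> 1"
    and \<gamma>_pos: "0 < \<gamma>"
    and \<gamma>_le: "\<gamma> * L * (real t - 1) \<le> 1"
  shows "(\<integral>\<omega>. (g (\<omega> 0) x0 - grad x0) \<bullet> grad (sgd_iter g \<gamma> x0 \<omega> t)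
            \<partial>(PiM {..<t} (\<lambda>_. D)))
         \<le> 3 * real t * \<gamma> * L * \<rho>\<^sup>2"
proof -
  interpret sgd_model D grad g L \<rho> \<gamma>
    using D smooth g_meas unbiased variance \<gamma>_pos by (simp add: sgd_model_def sgd_model_axioms_def)
  obtain n where n: "t = Suc n"
    using t by (cases t) auto
  show ?thesis
    using integral_PiM_first_sample[where x=x0 and n=n] noise_correlation_le[where x=x0 and n=n] \<gamma>_le
    by (simp add: n algebra_simps del: sgd_iter.simps)
qed

end
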